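(* Let $H$ be a finite dimensional Hopf algebra over a field $\mathbb{K}$ with coproduct $\Delta(x)=x_{(1)}\otimes x_{(2)}$ (Sweedler notation), counit $\epsilon$ and antipode $S$. Let $\mu_R\in H^*$ be a right integral and $e_R\in H$ a right cointegral, normalized so that $\mu_R(e_R)=1$. Put $a=\mu_R(e_{R(2)})\,e_{R(1)}\in H$, $\alpha=\mu_R(\,\cdot\,e_R)\in H^*$ (i.e. $\alpha(x)=\mu_R(xe_R)$), $q=\alpha(a)\in\mathbb{K}$, $e_L=S^{-1}(e_R)$ and $\mu_L=\mu_R\circ S$. Then $$S(e_R)=q\,e_L\qquad\text{and}\qquad \mu_L(e_R)=q.$$
   Context: A right integral of $H$ is an element $\mu_R\in H^*$ with $\mu_R(x_{(1)})x_{(2)}=\mu_R(x)1_H$ for all $x\in H$; a right cointegral is an element $e_R\in H$ with $e_Rx=\epsilon(x)e_R$ for all $x\in H$. For a finite dimensional Hopf algebra nonzero such elements exist, are unique up to scalars, and can be chosen with $\mu_R(e_R)=1$; the antipode is invertible. *)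

theory Defs
  imports Main
begin

text \<open>A finite dimensional algebra/coalgebra over a field 'k is described by
structure constants with respect to a basis indexed by a finite type 'n.
Elements of H are coordinate vectors x :: 'n \<Rightarrow> 'k (x = sum of x i * b_i),
elements of H \<otimes> H are coordinate functions on 'n \<times> 'n, elements of
H \<otimes> H \<otimes> H are coordinate functions on 'n \<times> 'n \<times> 'n,
and linear functionals on H (elements of H^* ) are given by their values on the
basis, phi :: 'n \<Rightarrow> 'k.

Structure constants:
  b_i b_j = sum_k M i j k b_k,   1 = sum_k U k b_k,
  Delta b_i = sum_{j,k} D i j k b_j \<otimes> b_k,   eps b_i = E i,
  S b_i = sum_j A i j b_j.\<close>

definition smul :: "'k::times \<Rightarrow> ('n \<Rightarrow> 'k) \<Rightarrow> ('n \<Rightarrow> 'k)" where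
  "smul c x = (\<lambda>i. c * x i)"

definition ev :: "('n::finite \<Rightarrow> 'k::comm_semiring_1) \<Rightarrow> ('n \<Rightarrow> 'k) \<Rightarrow> 'k" where
  "ev phi x = (\<Sum>i\<in>UNIV. phi i * x i)"

definition mul :: "('n::finite \<Rightarrow> 'n \<Rightarrow> 'n \<Rightarrow> 'k::comm_semiring_1)
    \<Rightarrow> ('n \<Rightarrow> 'k) \<Rightarrow> ('n \<Rightarrow> 'k) \<Rightarrow> ('n \<Rightarrow> 'k)" where
  "mul M x y = (\<lambda>k. \<Sum>i\<in>UNIV. \<Sum>j\<in>UNIV. x i * y j * M i j k)"

definition cop :: "('n::finite \<Rightarrow> 'n \<Rightarrow> 'n \<Rightarrow> 'k::comm_semiring_1)
    \<Rightarrow> ('n \<Rightarrow> 'k) \<Rightarrow> ('n \<times> 'n \<Rightarrow> 'k)" where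
  "cop D x = (\<lambda>(j, k). \<Sum>i\<in>UNIV. x i * D i j k)"

definition cou :: "('n::finite \<Rightarrow> 'k::comm_semiring_1) \<Rightarrow> ('n \<Rightarrow> 'k) \<Rightarrow> 'k" where
  "cou E x = (\<Sum>i\<in>UNIV. E i * x i)"

definition ant :: "('n::finite \<Rightarrow> 'n \<Rightarrow> 'k::comm_semiring_1) \<Rightarrow> ('n \<Rightarrow> 'k) \<Rightarrow> ('n \<Rightarrow> 'k)" where
  "ant A x = (\<lambda>j. \<Sum>i\<in>UNIV. x i * A i j)"

definition cop_left :: "('n::finite \<Rightarrow> 'n \<Rightarrow> 'n \<Rightarrow> 'k::comm_semiring_1)
    \<Rightarrow> ('n \<times> 'n \<Rightarrow> 'k) \<Rightarrow> ('n \<times> 'n \<times> 'n \<Rightarrow> 'k)" where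
  "cop_left D t = (\<lambda>(a, b, c). \<Sum>i\<in>UNIV. t (i, c) * D i a b)"

definition cop_right :: "('n::finite \<Rightarrow> 'n \<Rightarrow> 'n \<Rightarrow> 'k::comm_semiring_1)
    \<Rightarrow> ('n \<times> 'n \<Rightarrow> 'k) \<Rightarrow> ('n \<times> 'n \<times> 'n \<Rightarrow> 'k)" where
  "cop_right D t = (\<lambda>(a, b, c). \<Sum>j\<in>UNIV. t (a, j) * D j b c)"

definition cou_left :: "('n::finite \<Rightarrow> 'k::comm_semiring_1) \<Rightarrow> ('n \<times> 'n \<Rightarrow> 'k) \<Rightarrow> ('n \<Rightarrow> 'k)" where
  "cou_left E t = (\<lambda>c. \<Sum>i\<in>UNIV. E i * t (i, c))"

definition cou_right :: "('n::finite \<Rightarrow> 'k::comm_semiring_1) \<Rightarrow> ('n \<times> 'n \<Rightarrow> 'k) \<Rightarrow> ('n \<Rightarrow> 'k)" where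
  "cou_right E t = (\<lambda>a. \<Sum>j\<in>UNIV. E j * t (a, j))"

definition tmul :: "('n::finite \<Rightarrow> 'n \<Rightarrow> 'n \<Rightarrow> 'k::comm_semiring_1)
    \<Rightarrow> ('n \<times> 'n \<Rightarrow> 'k) \<Rightarrow> ('n \<times> 'n \<Rightarrow> 'k) \<Rightarrow> ('n \<times> 'n \<Rightarrow> 'k)" where
  "tmul M t s = (\<lambda>(k, l). \<Sum>i\<in>UNIV. \<Sum>j\<in>UNIV. \<Sum>i'\<in>UNIV. \<Sum>j'\<in>UNIV.
      t (i, j) * s (i', j') * M i i' k * M j j' l)"

definition tunit :: "('n \<Rightarrow> 'k::times) \<Rightarrow> ('n \<times> 'n \<Rightarrow> 'k)" where
  "tunit U = (\<lambda>(j, k). U j * U k)"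

definition ant_left :: "('n::finite \<Rightarrow> 'n \<Rightarrow> 'n \<Rightarrow> 'k::comm_semiring_1) \<Rightarrow> ('n \<Rightarrow> 'n \<Rightarrow> 'k)
    \<Rightarrow> ('n \<times> 'n \<Rightarrow> 'k) \<Rightarrow> ('n \<Rightarrow> 'k)" where
  "ant_left M A t = (\<lambda>k. \<Sum>i\<in>UNIV. \<Sum>j\<in>UNIV. \<Sum>p\<in>UNIV. t (i, j) * A i p * M p j k)"

definition ant_right :: "('n::finite \<Rightarrow> 'n \<Rightarrow> 'n \<Rightarrow> 'k::comm_semiring_1) \<Rightarrow> ('n \<Rightarrow> 'n \<Rightarrow> 'k)
    \<Rightarrow> ('n \<times> 'n \<Rightarrow> 'k) \<Rightarrow> ('n \<Rightarrow> 'k)" where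
  "ant_right M A t = (\<lambda>k. \<Sum>i\<in>UNIV. \<Sum>j\<in>UNIV. \<Sum>p\<in>UNIV. t (i, j) * A j p * M i p k)"

definition hopf_algebra ::
  "('n::finite \<Rightarrow> 'n \<Rightarrow> 'n \<Rightarrow> 'k::field) \<Rightarrow> ('n \<Rightarrow> 'k) \<Rightarrow> ('n \<Rightarrow> 'n \<Rightarrow> 'n \<Rightarrow> 'k)
    \<Rightarrow> ('n \<Rightarrow> 'k) \<Rightarrow> ('n \<Rightarrow> 'n \<Rightarrow> 'k) \<Rightarrow> bool" where
  "hopf_algebra M U D E A \<longleftrightarrow>
     (\<forall>x y z. mul M (mul M x y) z = mul M x (mul M y z)) \<and>
     (\<forall>x. mul M U x = x) \<and> (\<forall>x. mul M x U = x) \<and>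
     (\<forall>x. cop_left D (cop D x) = cop_right D (cop D x)) \<and>
     (\<forall>x. cou_left E (cop D x) = x) \<and> (\<forall>x. cou_right E (cop D x) = x) \<and>
     (\<forall>x y. cop D (mul M x y) = tmul M (cop D x) (cop D y)) \<and>
     cop D U = tunit U \<and>
     (\<forall>x y. cou E (mul M x y) = cou E x * cou E y) \<and> cou E U = 1 \<and>
     (\<forall>x. ant_left M A (cop D x) = smul (cou E x) U) \<and>
     (\<forall>x. ant_right M A (cop D x) = smul (cou E x) U)"

definition right_integral :: "('n::finite \<Rightarrow> 'n \<Rightarrow> 'n \<Rightarrow> 'k::field) \<Rightarrow> ('n \<Rightarrow> 'k)
    \<Rightarrow> ('n \<Rightarrow> 'n \<Rightarrow> 'n \<Rightarrow> 'k) \<Rightarrow> ('n \<Rightarrow> 'k) \<Rightarrow> bool" where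
  "right_integral M U D mu \<longleftrightarrow>
     (\<forall>x. (\<lambda>c. \<Sum>i\<in>UNIV. mu i * cop D x (i, c)) = smul (ev mu x) U)"

definition right_cointegral :: "('n::finite \<Rightarrow> 'n \<Rightarrow> 'n \<Rightarrow> 'k::field) \<Rightarrow> ('n \<Rightarrow> 'k)
    \<Rightarrow> ('n \<Rightarrow> 'k) \<Rightarrow> bool" where
  "right_cointegral M E e \<longleftrightarrow> (\<forall>x. mul M e x = smul (cou E x) e)"

end

theory Submission
  imports Defs
begin

text \<open>Write S for the antipode, \<mu> for the right integral and e for the right cointegral
  with \<mu>(e) = 1. The key fact is the formula S(x) = \<mu>(e_(1) x) e_(2). As S reverses products
  and is bijective, S(e) is a left cointegral, so at x = S(e) the formula gives
  S(S(e)) = \<epsilon>(e_(1)) \<mu>(S(e)) e_(2) = \<mu>(S(e)) e. Applying \<mu> to the formula at x = e gives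
  \<mu>(S(e)) = \<mu>(e_(1) e) \<mu>(e_(2)) = \<mu>(a e) = q. Hence S(e) = q S^-1(e), and \<mu>_L(e) = \<mu>(S(e)) = q.

  That S reverses products follows from uniqueness of inverses in the convolution algebra
  Hom(H \<otimes> H, H). Bijectivity of S is proved by writing down a left inverse in terms of
  \<mu>, and a right inverse by the same construction in the dual Hopf algebra, where e is
  an integral.\<close>

lemma if_zero_mult [simp]:
  "(if P then a else 0) * b = (if P then a * b else 0)"
  "b * (if P then a else 0) = (if P then b * a else 0)" for a b :: "'a::mult_zero"
  by simp_all

lemma sum_if_zero [simp]: "(\<Sum>j\<in>A. if P then f j else 0) = (if P then sum f A else 0)"
  by simp

lemma sum_cycle3_out:
  "(\<Sum>a\<in>P. \<Sum>b\<in>Q. \<Sum>c\<in>R. f a b c) = (\<Sum>c\<in>R. \<Sum>a\<in>P. \<Sum>b\<in>Q. f a b c)"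
  by (subst sum.swap, rule sum.cong[OF refl], rule sum.swap)

lemma sum_cycle3_in:
  "(\<Sum>a\<in>P. \<Sum>b\<in>Q. \<Sum>c\<in>R. f a b c) = (\<Sum>b\<in>Q. \<Sum>c\<in>R. \<Sum>a\<in>P. f a b c)"
  by (rule sum_cycle3_out[THEN trans], rule sum_cycle3_out)

lemma sum_cycle4_in:
  "(\<Sum>a\<in>P. \<Sum>b\<in>Q. \<Sum>c\<in>R. \<Sum>d\<in>S. f a b c d) = (\<Sum>b\<in>Q. \<Sum>c\<in>R. \<Sum>d\<in>S. \<Sum>a\<in>P. f a b c d)"
  by (rule sum.swap[THEN trans], rule sum.cong[OF refl], rule sum_cycle3_in)

lemma sum_cycle5_out:
  "(\<Sum>a\<in>P. \<Sum>b\<in>Q. \<Sum>c\<in>R. \<Sum>d\<in>S. \<Sum>e\<in>T. f a b c d e) =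
   (\<Sum>e\<in>T. \<Sum>a\<in>P. \<Sum>b\<in>Q. \<Sum>c\<in>R. \<Sum>d\<in>S. f a b c d e)"
  by (rule sum.cong[OF refl, THEN trans], rule sum_cycle4_in[symmetric], rule sum.swap)

lemma sum_swap_2_2:
  "(\<Sum>a\<in>P. \<Sum>b\<in>Q. \<Sum>c\<in>R. \<Sum>d\<in>S. f a b c d) = (\<Sum>c\<in>R. \<Sum>d\<in>S. \<Sum>a\<in>P. \<Sum>b\<in>Q. f a b c d)"
  by (rule sum.cong[OF refl, THEN trans], rule sum_cycle3_in, rule sum_cycle3_in)

lemma sum_swap_2_4:
  "(\<Sum>p\<in>P. \<Sum>q\<in>Q. \<Sum>a\<in>R. \<Sum>b\<in>S. \<Sum>c\<in>T. \<Sum>d\<in>V. f p q a b c d) =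
   (\<Sum>a\<in>R. \<Sum>b\<in>S. \<Sum>c\<in>T. \<Sum>d\<in>V. \<Sum>p\<in>P. \<Sum>q\<in>Q. f p q a b c d)"
  by (rule sum_swap_2_2[THEN trans], rule sum.cong[OF refl], rule sum.cong[OF refl], rule sum_swap_2_2)

section \<open>Hopf algebras in structure constants\<close>

locale hopf_constants =
  fixes M :: "'n::finite \<Rightarrow> 'n \<Rightarrow> 'n \<Rightarrow> 'k::comm_ring_1" and U :: "'n \<Rightarrow> 'k"
    and D :: "'n \<Rightarrow> 'n \<Rightarrow> 'n \<Rightarrow> 'k" and E :: "'n \<Rightarrow> 'k" and A :: "'n \<Rightarrow> 'n \<Rightarrow> 'k"
  assumes assoc: "\<And>i j l m. (\<Sum>k\<in>UNIV. M i j k * M k l m) = (\<Sum>k\<in>UNIV. M j l k * M i k m)"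
    and unit_left: "\<And>j k. (\<Sum>i\<in>UNIV. U i * M i j k) = (if j = k then 1 else 0)"
    and unit_right: "\<And>i k. (\<Sum>j\<in>UNIV. U j * M i j k) = (if i = k then 1 else 0)"
    and coassoc: "\<And>x a b c. (\<Sum>i\<in>UNIV. D x i c * D i a b) = (\<Sum>j\<in>UNIV. D x a j * D j b c)"
    and counit_left: "\<And>x c. (\<Sum>i\<in>UNIV. E i * D x i c) = (if x = c then 1 else 0)"
    and counit_right: "\<And>x a. (\<Sum>j\<in>UNIV. E j * D x a j) = (if x = a then 1 else 0)"
    and comult_mult: "\<And>i j a b. (\<Sum>k\<in>UNIV. M i j k * D k a b) =
       (\<Sum>i1\<in>UNIV. \<Sum>j1\<in>UNIV. \<Sum>i2\<in>UNIV. \<Sum>j2\<in>UNIV. D i i1 j1 * D j i2 j2 * M i1 i2 a * M j1 j2 b)"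
    and comult_unit: "\<And>a b. (\<Sum>k\<in>UNIV. U k * D k a b) = U a * U b"
    and counit_mult: "\<And>i j. (\<Sum>k\<in>UNIV. E k * M i j k) = E i * E j"
    and counit_unit: "(\<Sum>k\<in>UNIV. E k * U k) = 1"
    and antipode_left: "\<And>x k. (\<Sum>a\<in>UNIV. \<Sum>b\<in>UNIV. \<Sum>p\<in>UNIV. D x a b * A a p * M p b k) = E x * U k"
    and antipode_right: "\<And>x k. (\<Sum>a\<in>UNIV. \<Sum>b\<in>UNIV. \<Sum>p\<in>UNIV. D x a b * A b p * M a p k) = E x * U k"
begin

text \<open>In Sweedler notation, sweedler y F is F(y_(1), y_(2)) for the basis vector b_y.\<close>

definition sweedler :: "'n \<Rightarrow> ('n \<Rightarrow> 'n \<Rightarrow> 'k) \<Rightarrow> 'k" where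
  "sweedler y F = (\<Sum>a\<in>UNIV. \<Sum>b\<in>UNIV. D y a b * F a b)"

lemma sweedler_cmult_left: "sweedler y (\<lambda>a b. c * F a b) = c * sweedler y F"
  by (simp add: sweedler_def sum_distrib_left mult_ac)

lemma sweedler_cmult_right: "sweedler y (\<lambda>a b. F a b * c) = sweedler y F * c"
  by (simp add: sweedler_def sum_distrib_right sum_distrib_left mult_ac)

lemma sweedler_sum: "sweedler y (\<lambda>a b. \<Sum>k\<in>UNIV. F k a b) = (\<Sum>k\<in>UNIV. sweedler y (F k))"
  unfolding sweedler_def by (simp only: sum_distrib_left, rule sum_cycle3_out)

lemma sweedler_commute:
  "sweedler y (\<lambda>a b. sweedler z (\<lambda>c d. F a b c d)) = sweedler z (\<lambda>c d. sweedler y (\<lambda>a b. F a b c d))"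
proof -
  have "sweedler y (\<lambda>a b. sweedler z (\<lambda>c d. F a b c d)) =
      (\<Sum>a\<in>UNIV. \<Sum>b\<in>UNIV. \<Sum>c\<in>UNIV. \<Sum>d\<in>UNIV. D y a b * (D z c d * F a b c d))"
    by (simp add: sweedler_def sum_distrib_left)
  also have "\<dots> = (\<Sum>c\<in>UNIV. \<Sum>d\<in>UNIV. \<Sum>a\<in>UNIV. \<Sum>b\<in>UNIV. D y a b * (D z c d * F a b c d))"
    by (rule sum_swap_2_2)
  also have "\<dots> = sweedler z (\<lambda>c d. sweedler y (\<lambda>a b. F a b c d))"
    by (simp add: sweedler_def sum_distrib_left mult_ac)
  finally show ?thesis .
qed

lemma sweedler_sum_sweedler:
  "sweedler y (\<lambda>p q. \<Sum>i\<in>UNIV. c i * sweedler i (F p q)) =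
   (\<Sum>i\<in>UNIV. c i * sweedler i (\<lambda>a b. sweedler y (\<lambda>p q. F p q a b)))"
  by (subst sweedler_sum, subst sweedler_cmult_left, subst sweedler_commute, rule refl)

lemma sweedler_counit_left: "sweedler y (\<lambda>a b. E a * G b) = G y"
proof -
  have "sweedler y (\<lambda>a b. E a * G b) = (\<Sum>b\<in>UNIV. (\<Sum>a\<in>UNIV. E a * D y a b) * G b)"
    unfolding sweedler_def by (subst sum.swap, simp add: sum_distrib_right sum_distrib_left mult_ac)
  then show ?thesis by (simp add: counit_left)
qed

lemma sweedler_counit_right: "sweedler y (\<lambda>a b. E b * G a) = G y"
proof -
  have "sweedler y (\<lambda>a b. E b * G a) = (\<Sum>a\<in>UNIV. (\<Sum>b\<in>UNIV. E b * D y a b) * G a)"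
    unfolding sweedler_def by (simp add: sum_distrib_right sum_distrib_left mult_ac)
  then show ?thesis by (simp add: counit_right)
qed

lemma sweedler_coassoc:
  "sweedler y (\<lambda>p q. sweedler p (\<lambda>a b. F a b q)) = sweedler y (\<lambda>a r. sweedler r (\<lambda>b q. F a b q))"
proof -
  have "sweedler y (\<lambda>p q. sweedler p (\<lambda>a b. F a b q)) =
      (\<Sum>p\<in>UNIV. \<Sum>q\<in>UNIV. \<Sum>a\<in>UNIV. \<Sum>b\<in>UNIV. D y p q * (D p a b * F a b q))"
    by (simp add: sweedler_def sum_distrib_left)
  also have "\<dots> = (\<Sum>a\<in>UNIV. \<Sum>b\<in>UNIV. \<Sum>p\<in>UNIV. \<Sum>q\<in>UNIV. D y p q * (D p a b * F a b q))"
    by (rule sum_swap_2_2)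
  also have "\<dots> = (\<Sum>a\<in>UNIV. \<Sum>b\<in>UNIV. \<Sum>q\<in>UNIV. (\<Sum>p\<in>UNIV. D y p q * D p a b) * F a b q)"
    by (rule sum.cong[OF refl], rule sum.cong[OF refl], subst sum.swap,
        simp add: sum_distrib_right sum_distrib_left mult_ac)
  also have "\<dots> = (\<Sum>a\<in>UNIV. \<Sum>b\<in>UNIV. \<Sum>q\<in>UNIV. (\<Sum>r\<in>UNIV. D y a r * D r b q) * F a b q)"
    by (simp add: coassoc)
  also have "\<dots> = (\<Sum>a\<in>UNIV. \<Sum>b\<in>UNIV. \<Sum>r\<in>UNIV. \<Sum>q\<in>UNIV. D y a r * (D r b q * F a b q))"
    by (rule sum.cong[OF refl], rule sum.cong[OF refl], rule trans[OF _ sum.swap],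
        simp add: sum_distrib_right sum_distrib_left mult_ac)
  also have "\<dots> = sweedler y (\<lambda>a r. sweedler r (\<lambda>b q. F a b q))"
    by (simp add: sweedler_def sum_distrib_left, rule sum.cong[OF refl], rule sum.swap)
  finally show ?thesis .
qed

lemma sweedler_mult:
  "(\<Sum>k\<in>UNIV. M i j k * sweedler k F) =
   sweedler i (\<lambda>a1 b1. sweedler j (\<lambda>a2 b2. \<Sum>p\<in>UNIV. \<Sum>q\<in>UNIV. M a1 a2 p * M b1 b2 q * F p q))"
proof -
  have "(\<Sum>k\<in>UNIV. M i j k * sweedler k F) = (\<Sum>k\<in>UNIV. \<Sum>p\<in>UNIV. \<Sum>q\<in>UNIV. M i j k * D k p q * F p q)"
    by (simp add: sweedler_def sum_distrib_left mult_ac)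
  also have "\<dots> = (\<Sum>p\<in>UNIV. \<Sum>q\<in>UNIV. (\<Sum>k\<in>UNIV. M i j k * D k p q) * F p q)"
    by (subst sum_cycle3_in, simp add: sum_distrib_right)
  also have "\<dots> = (\<Sum>p\<in>UNIV. \<Sum>q\<in>UNIV. \<Sum>i1\<in>UNIV. \<Sum>j1\<in>UNIV. \<Sum>i2\<in>UNIV. \<Sum>j2\<in>UNIV.
       D i i1 j1 * D j i2 j2 * M i1 i2 p * M j1 j2 q * F p q)"
    by (simp add: comult_mult sum_distrib_right)
  also have "\<dots> = (\<Sum>i1\<in>UNIV. \<Sum>j1\<in>UNIV. \<Sum>i2\<in>UNIV. \<Sum>j2\<in>UNIV. \<Sum>p\<in>UNIV. \<Sum>q\<in>UNIV.
       D i i1 j1 * D j i2 j2 * M i1 i2 p * M j1 j2 q * F p q)"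
    by (rule sum_swap_2_4)
  also have "\<dots> = sweedler i (\<lambda>a1 b1. sweedler j (\<lambda>a2 b2. \<Sum>p\<in>UNIV. \<Sum>q\<in>UNIV. M a1 a2 p * M b1 b2 q * F p q))"
    by (simp add: sweedler_def sum_distrib_left mult_ac)
  finally show ?thesis .
qed

lemma sweedler_antipode_left: "sweedler x (\<lambda>a b. \<Sum>p\<in>UNIV. A a p * M p b k) = E x * U k"
  using antipode_left[of x k] by (simp add: sweedler_def sum_distrib_left mult_ac)

lemma sweedler_antipode_right: "sweedler x (\<lambda>a b. \<Sum>p\<in>UNIV. A b p * M a p k) = E x * U k"
  using antipode_right[of x k] by (simp add: sweedler_def sum_distrib_left mult_ac)

lemma sweedler_antipode_left_sum: "(\<Sum>p\<in>UNIV. sweedler x (\<lambda>a b. A a p * M p b k)) = E x * U k"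
  using sweedler_antipode_left[of x k] by (simp add: sweedler_sum)

lemma sweedler_antipode_right_sum: "(\<Sum>p\<in>UNIV. sweedler x (\<lambda>a b. A b p * M a p k)) = E x * U k"
  using sweedler_antipode_right[of x k] by (simp add: sweedler_sum)

end

section \<open>The antipode reverses products and coproducts\<close>

text \<open>Hom(C, H) under convolution, for a coalgebra C presented by its Sweedler functional.\<close>

locale convolution_algebra =
  fixes C :: "'c \<Rightarrow> ('c \<Rightarrow> 'c \<Rightarrow> 'k::comm_semiring_1) \<Rightarrow> 'k" and EC :: "'c \<Rightarrow> 'k"
    and M :: "'n::finite \<Rightarrow> 'n \<Rightarrow> 'n \<Rightarrow> 'k" and U :: "'n \<Rightarrow> 'k"
  assumes co_sum: "\<And>c F. C c (\<lambda>a b. \<Sum>k\<in>(UNIV::'n set). F k a b) = (\<Sum>k\<in>UNIV. C c (F k))"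
    and co_cmult: "\<And>c x F. C c (\<lambda>a b. x * F a b) = x * C c F"
    and co_coassoc: "\<And>y F. C y (\<lambda>p q. C p (\<lambda>a b. F a b q)) = C y (\<lambda>a r. C r (\<lambda>b q. F a b q))"
    and co_counit_left: "\<And>y G. C y (\<lambda>a b. EC a * G b) = G y"
    and co_counit_right: "\<And>y G. C y (\<lambda>a b. EC b * G a) = G y"
    and assoc: "\<And>i j l m. (\<Sum>k\<in>UNIV. M i j k * M k l m) = (\<Sum>k\<in>UNIV. M j l k * M i k m)"
    and unit_left: "\<And>j k. (\<Sum>i\<in>UNIV. U i * M i j k) = (if j = k then 1 else 0)"
    and unit_right: "\<And>i k. (\<Sum>j\<in>UNIV. U j * M i j k) = (if i = k then 1 else 0)"
begin

lemma co_cmult_right: "C c (\<lambda>a b. F a b * x) = C c F * x"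
  using co_cmult[of c x F] by (simp add: mult.commute)

lemma co_pull_in:
  "(\<Sum>k\<in>(UNIV::'n set). C c (F k)) = C c (\<lambda>a b. \<Sum>k\<in>UNIV. F k a b)"
  "x * C c G = C c (\<lambda>a b. x * G a b)"
  "C c G * x = C c (\<lambda>a b. G a b * x)"
  by (simp_all add: co_sum co_cmult co_cmult_right)

definition conv :: "('c \<Rightarrow> 'n \<Rightarrow> 'k) \<Rightarrow> ('c \<Rightarrow> 'n \<Rightarrow> 'k) \<Rightarrow> 'c \<Rightarrow> 'n \<Rightarrow> 'k" where
  "conv f g c k = C c (\<lambda>a b. \<Sum>p\<in>UNIV. \<Sum>r\<in>UNIV. f a p * g b r * M p r k)"

definition conv_unit :: "'c \<Rightarrow> 'n \<Rightarrow> 'k" where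
  "conv_unit c k = EC c * U k"

lemma conv_assoc: "conv (conv f g) h = conv f (conv g h)"
proof (intro ext)
  fix c k
  have L: "conv (conv f g) h c k = C c (\<lambda>a b. C a (\<lambda>a1 a2.
      \<Sum>p\<in>UNIV. \<Sum>r\<in>UNIV. \<Sum>p1\<in>UNIV. \<Sum>r1\<in>UNIV. f a1 p1 * g a2 r1 * M p1 r1 p * h b r * M p r k))"
    unfolding conv_def by (simp add: co_pull_in sum_distrib_left sum_distrib_right)
  have R: "conv f (conv g h) c k = C c (\<lambda>a1 a'. C a' (\<lambda>a2 b.
      \<Sum>p1\<in>UNIV. \<Sum>q\<in>UNIV. \<Sum>r1\<in>UNIV. \<Sum>r\<in>UNIV. f a1 p1 * (g a2 r1 * h b r * M r1 r q) * M p1 q k))"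
    unfolding conv_def by (simp add: co_pull_in sum_distrib_left sum_distrib_right)
  have I: "(\<Sum>p\<in>UNIV. \<Sum>r\<in>UNIV. \<Sum>p1\<in>UNIV. \<Sum>r1\<in>UNIV. f a1 p1 * g a2 r1 * M p1 r1 p * h b r * M p r k)
     = (\<Sum>p1\<in>UNIV. \<Sum>q\<in>UNIV. \<Sum>r1\<in>UNIV. \<Sum>r\<in>UNIV. f a1 p1 * (g a2 r1 * h b r * M r1 r q) * M p1 q k)"
    for a1 a2 b
  proof -
    have "(\<Sum>p\<in>UNIV. \<Sum>r\<in>UNIV. \<Sum>p1\<in>UNIV. \<Sum>r1\<in>UNIV. f a1 p1 * g a2 r1 * M p1 r1 p * h b r * M p r k)
      = (\<Sum>p1\<in>UNIV. \<Sum>r1\<in>UNIV. \<Sum>r\<in>UNIV. \<Sum>p\<in>UNIV. f a1 p1 * g a2 r1 * M p1 r1 p * h b r * M p r k)"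
      by (subst sum_swap_2_2, rule sum.cong[OF refl], rule sum.cong[OF refl], rule sum.swap)
    also have "\<dots> = (\<Sum>p1\<in>UNIV. \<Sum>r1\<in>UNIV. \<Sum>r\<in>UNIV. f a1 p1 * g a2 r1 * h b r * (\<Sum>p\<in>UNIV. M p1 r1 p * M p r k))"
      by (simp add: sum_distrib_left mult_ac)
    also have "\<dots> = (\<Sum>p1\<in>UNIV. \<Sum>r1\<in>UNIV. \<Sum>r\<in>UNIV. f a1 p1 * g a2 r1 * h b r * (\<Sum>q\<in>UNIV. M r1 r q * M p1 q k))"
      by (simp add: assoc)
    also have "\<dots> = (\<Sum>p1\<in>UNIV. \<Sum>q\<in>UNIV. \<Sum>r1\<in>UNIV. \<Sum>r\<in>UNIV. f a1 p1 * (g a2 r1 * h b r * M r1 r q) * M p1 q k)"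
      by (simp add: sum_distrib_left mult_ac, rule sum.cong[OF refl], rule sum_cycle3_out)
    finally show ?thesis .
  qed
  show "conv (conv f g) h c k = conv f (conv g h) c k"
    unfolding L R co_coassoc I ..
qed

lemma conv_unit_right: "conv f conv_unit = f"
proof (intro ext)
  fix c k
  have "conv f conv_unit c k = C c (\<lambda>a b. EC b * (\<Sum>p\<in>UNIV. f a p * (\<Sum>r\<in>UNIV. U r * M p r k)))"
    unfolding conv_def conv_unit_def by (simp add: sum_distrib_left mult_ac)
  then show "conv f conv_unit c k = f c k" by (simp add: unit_right co_counit_right)
qed

lemma conv_unit_left: "conv conv_unit f = f"
proof (intro ext)
  fix c k
  have "conv conv_unit f c k = C c (\<lambda>a b. EC a * (\<Sum>r\<in>UNIV. f b r * (\<Sum>p\<in>UNIV. U p * M p r k)))"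
    unfolding conv_def conv_unit_def
    by (rule arg_cong[where f="C c"], intro ext, simp add: sum_distrib_left mult_ac, rule sum.swap)
  then show "conv conv_unit f c k = f c k" by (simp add: unit_left co_counit_left)
qed

lemma conv_inverse_unique:
  assumes "conv g f = conv_unit" and "conv f h = conv_unit"
  shows "g = h"
  by (metis assms conv_assoc conv_unit_left conv_unit_right)

end

context hopf_constants
begin

text \<open>H \<otimes> H as a coalgebra, with basis indexed by pairs.\<close>

definition sweedler_pair :: "'n \<times> 'n \<Rightarrow> ('n \<times> 'n \<Rightarrow> 'n \<times> 'n \<Rightarrow> 'k) \<Rightarrow> 'k" where
  "sweedler_pair y F = sweedler (fst y) (\<lambda>a1 b1. sweedler (snd y) (\<lambda>a2 b2. F (a1, a2) (b1, b2)))"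

definition counit_pair :: "'n \<times> 'n \<Rightarrow> 'k" where
  "counit_pair y = E (fst y) * E (snd y)"

lemma sweedler_pair_coassoc:
  "sweedler_pair y (\<lambda>p q. sweedler_pair p (\<lambda>a b. F a b q)) =
   sweedler_pair y (\<lambda>a r. sweedler_pair r (\<lambda>b q. F a b q))"
proof -
  obtain y1 y2 where y: "y = (y1, y2)" by (cases y)
  have "sweedler_pair y (\<lambda>p q. sweedler_pair p (\<lambda>a b. F a b q)) =
    sweedler y1 (\<lambda>p1 q1. sweedler p1 (\<lambda>a1 b1.
      sweedler y2 (\<lambda>p2 q2. sweedler p2 (\<lambda>a2 b2. F (a1,a2) (b1,b2) (q1,q2)))))"
    by (simp add: sweedler_pair_def y, subst sweedler_commute, rule refl)
  also have "\<dots> = sweedler y1 (\<lambda>a1 r1. sweedler r1 (\<lambda>b1 q1.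
      sweedler y2 (\<lambda>a2 r2. sweedler r2 (\<lambda>b2 q2. F (a1,a2) (b1,b2) (q1,q2)))))"
    by (subst sweedler_coassoc, rule sweedler_coassoc)
  also have "\<dots> = sweedler_pair y (\<lambda>a r. sweedler_pair r (\<lambda>b q. F a b q))"
    by (simp add: sweedler_pair_def y, subst sweedler_commute, rule refl)
  finally show ?thesis .
qed

lemma convolution_algebra_pair: "convolution_algebra sweedler_pair counit_pair M U"
proof
  show "sweedler_pair c (\<lambda>a b. \<Sum>k\<in>UNIV. F k a b) = (\<Sum>k\<in>UNIV. sweedler_pair c (F k))"
    for c and F :: "'n \<Rightarrow> _"
    by (simp add: sweedler_pair_def sweedler_sum)
  show "sweedler_pair c (\<lambda>a b. x * F a b) = x * sweedler_pair c F" for c x F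
    by (simp add: sweedler_pair_def sweedler_cmult_left)
  show "sweedler_pair y (\<lambda>a b. counit_pair a * G b) = G y" for y G
    by (simp add: sweedler_pair_def counit_pair_def mult.assoc sweedler_cmult_left sweedler_counit_left)
  show "sweedler_pair y (\<lambda>a b. counit_pair b * G a) = G y" for y G
    by (simp add: sweedler_pair_def counit_pair_def mult.assoc sweedler_cmult_left sweedler_counit_right)
qed (fact sweedler_pair_coassoc assoc unit_left unit_right)+

interpretation pair: convolution_algebra sweedler_pair counit_pair M U
  by (rule convolution_algebra_pair)

definition mult_pair :: "'n \<times> 'n \<Rightarrow> 'n \<Rightarrow> 'k" where
  "mult_pair y k = M (fst y) (snd y) k"

definition antipode_mult_pair :: "'n \<times> 'n \<Rightarrow> 'n \<Rightarrow> 'k" where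
  "antipode_mult_pair y k = (\<Sum>p\<in>UNIV. M (fst y) (snd y) p * A p k)"

definition mult_antipode_pair :: "'n \<times> 'n \<Rightarrow> 'n \<Rightarrow> 'k" where
  "mult_antipode_pair y k = (\<Sum>p\<in>UNIV. \<Sum>r\<in>UNIV. A (snd y) p * A (fst y) r * M p r k)"

lemma conv_antipode_mult_pair: "pair.conv antipode_mult_pair mult_pair = pair.conv_unit"
proof (intro ext)
  fix y :: "'n \<times> 'n" and t
  obtain i j where y: "y = (i, j)" by (cases y)
  have "(\<Sum>p\<in>UNIV. \<Sum>r\<in>UNIV. (\<Sum>q\<in>UNIV. M a1 a2 q * A q p) * M b1 b2 r * M p r t)
      = (\<Sum>q\<in>UNIV. \<Sum>r\<in>UNIV. M a1 a2 q * M b1 b2 r * (\<Sum>p\<in>UNIV. A q p * M p r t))" for a1 a2 b1 b2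
    by (simp add: sum_distrib_left sum_distrib_right mult_ac,
        subst sum_cycle3_out, rule sum.cong[OF refl], rule sum.swap)
  then have "pair.conv antipode_mult_pair mult_pair y t = sweedler i (\<lambda>a1 b1. sweedler j (\<lambda>a2 b2.
      \<Sum>q\<in>UNIV. \<Sum>r\<in>UNIV. M a1 a2 q * M b1 b2 r * (\<Sum>p\<in>UNIV. A q p * M p r t)))"
    by (simp add: pair.conv_def sweedler_pair_def antipode_mult_pair_def mult_pair_def y)
  also have "\<dots> = (\<Sum>k\<in>UNIV. M i j k * sweedler k (\<lambda>q r. \<Sum>p\<in>UNIV. A q p * M p r t))"
    by (rule sweedler_mult[symmetric])
  also have "\<dots> = (\<Sum>k\<in>UNIV. E k * M i j k) * U t"
    by (simp add: sweedler_antipode_left sum_distrib_right sum_distrib_left mult_ac)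
  also have "\<dots> = pair.conv_unit y t"
    by (simp add: counit_mult pair.conv_unit_def counit_pair_def y)
  finally show "pair.conv antipode_mult_pair mult_pair y t = pair.conv_unit y t" .
qed

lemma mult_assoc4:
  "(\<Sum>p\<in>UNIV. \<Sum>r\<in>UNIV. M a b p * (\<Sum>p'\<in>UNIV. \<Sum>r'\<in>UNIV. x p' * y r' * M p' r' r) * M p r t) =
   (\<Sum>q\<in>UNIV. \<Sum>r'\<in>UNIV. \<Sum>k\<in>UNIV. (y r' * M k r' q * M a q t) * (\<Sum>p'\<in>UNIV. x p' * M b p' k))"
proof -
  have "(\<Sum>p\<in>UNIV. \<Sum>r\<in>UNIV. M a b p * (\<Sum>p'\<in>UNIV. \<Sum>r'\<in>UNIV. x p' * y r' * M p' r' r) * M p r t)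
     = (\<Sum>r\<in>UNIV. (\<Sum>p'\<in>UNIV. \<Sum>r'\<in>UNIV. x p' * y r' * M p' r' r) * (\<Sum>p\<in>UNIV. M a b p * M p r t))"
    by (simp add: sum_distrib_left sum_distrib_right mult_ac, subst sum_cycle4_in,
        simp add: sum_distrib_left sum_distrib_right mult_ac)
  also have "\<dots> = (\<Sum>r\<in>UNIV. (\<Sum>p'\<in>UNIV. \<Sum>r'\<in>UNIV. x p' * y r' * M p' r' r) * (\<Sum>q\<in>UNIV. M b r q * M a q t))"
    by (simp add: assoc)
  also have "\<dots> = (\<Sum>q\<in>UNIV. \<Sum>p'\<in>UNIV. \<Sum>r'\<in>UNIV. x p' * y r' * M a q t * (\<Sum>r\<in>UNIV. M p' r' r * M b r q))"
    by (simp add: sum_distrib_left sum_distrib_right mult_ac,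
        rule sum_cycle4_in[symmetric, THEN trans], rule sum.cong[OF refl], rule sum_cycle3_in)
  also have "\<dots> = (\<Sum>q\<in>UNIV. \<Sum>p'\<in>UNIV. \<Sum>r'\<in>UNIV. x p' * y r' * M a q t * (\<Sum>k\<in>UNIV. M b p' k * M k r' q))"
    by (simp add: assoc)
  also have "\<dots> = (\<Sum>q\<in>UNIV. \<Sum>r'\<in>UNIV. \<Sum>k\<in>UNIV. (y r' * M k r' q * M a q t) * (\<Sum>p'\<in>UNIV. x p' * M b p' k))"
    by (simp add: sum_distrib_left sum_distrib_right mult_ac, rule sum.cong[OF refl], rule sum_cycle3_in)
  finally show ?thesis .
qed

lemma conv_mult_antipode_pair: "pair.conv mult_pair mult_antipode_pair = pair.conv_unit"
proof (intro ext)
  fix y :: "'n \<times> 'n" and t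
  obtain i j where y: "y = (i, j)" by (cases y)
  have "pair.conv mult_pair mult_antipode_pair y t = sweedler i (\<lambda>a1 b1. sweedler j (\<lambda>a2 b2.
      \<Sum>q\<in>UNIV. \<Sum>r'\<in>UNIV. \<Sum>k\<in>UNIV. (A b1 r' * M k r' q * M a1 q t) * (\<Sum>p'\<in>UNIV. A b2 p' * M a2 p' k)))"
    by (simp add: pair.conv_def sweedler_pair_def mult_antipode_pair_def mult_pair_def y mult_assoc4)
  also have "\<dots> = sweedler i (\<lambda>a1 b1. \<Sum>q\<in>UNIV. \<Sum>r'\<in>UNIV. \<Sum>k\<in>UNIV. (A b1 r' * M k r' q * M a1 q t) * (E j * U k))"
    by (simp only: sweedler_sum sweedler_cmult_left sweedler_antipode_right sweedler_antipode_right_sum)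
  also have "\<dots> = sweedler i (\<lambda>a1 b1. E j * (\<Sum>q\<in>UNIV. A b1 q * M a1 q t))"
  proof -
    have "(\<Sum>q\<in>UNIV. \<Sum>r'\<in>UNIV. \<Sum>k\<in>UNIV. (A b1 r' * M k r' q * M a1 q t) * (E j * U k))
      = E j * (\<Sum>q\<in>UNIV. \<Sum>r'\<in>UNIV. A b1 r' * M a1 q t * (\<Sum>k\<in>UNIV. U k * M k r' q))" for a1 b1
      by (simp add: sum_distrib_left sum_distrib_right mult_ac)
    then show ?thesis by (simp add: unit_left)
  qed
  also have "\<dots> = pair.conv_unit y t"
    by (simp add: sweedler_cmult_left sweedler_antipode_right pair.conv_unit_def counit_pair_def y mult_ac)
  finally show "pair.conv mult_pair mult_antipode_pair y t = pair.conv_unit y t" .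
qed

text \<open>S(b_i b_j) = S(b_j) S(b_i).\<close>

lemma antipode_mult:
  "(\<Sum>p\<in>UNIV. M i j p * A p k) = (\<Sum>p\<in>UNIV. \<Sum>r\<in>UNIV. A j p * A i r * M p r k)"
proof -
  have "antipode_mult_pair = mult_antipode_pair"
    by (rule pair.conv_inverse_unique[OF conv_antipode_mult_pair conv_mult_antipode_pair])
  then have "antipode_mult_pair (i, j) k = mult_antipode_pair (i, j) k" by simp
  then show ?thesis by (simp add: antipode_mult_pair_def mult_antipode_pair_def)
qed

text \<open>The dual Hopf algebra H^* has the transposed structure constants.\<close>

lemma hopf_constants_dual: "hopf_constants (\<lambda>i j k. D k i j) E (\<lambda>k i j. M i j k) U (\<lambda>i j. A j i)"
proof
  show "(\<Sum>k\<in>UNIV. D k i j * D m k l) = (\<Sum>k\<in>UNIV. D k j l * D m i k)" for i j l m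
    using coassoc[where x=m and a=i and b=j and c=l] by (simp add: mult.commute)
  show "(\<Sum>i\<in>UNIV. E i * D k i j) = (if j = k then 1 else 0)" for j k
    using counit_left[where x=k and c=j] by auto
  show "(\<Sum>j\<in>UNIV. E j * D k i j) = (if i = k then 1 else 0)" for i k
    using counit_right[where x=k and a=i] by auto
  show "(\<Sum>i\<in>UNIV. M i c x * M a b i) = (\<Sum>j\<in>UNIV. M a j x * M b c j)" for x a b c
    using assoc[where i=a and j=b and l=c and m=x] by (simp add: mult.commute)
  show "(\<Sum>i\<in>UNIV. U i * M i c x) = (if x = c then 1 else 0)" for x c
    using unit_left[where j=c and k=x] by auto
  show "(\<Sum>j\<in>UNIV. U j * M a j x) = (if x = a then 1 else 0)" for x a
    using unit_right[where i=a and k=x] by auto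
  show "(\<Sum>k\<in>UNIV. D k i j * M a b k) =
       (\<Sum>i1\<in>UNIV. \<Sum>j1\<in>UNIV. \<Sum>i2\<in>UNIV. \<Sum>j2\<in>UNIV. M i1 j1 i * M i2 j2 j * D a i1 i2 * D b j1 j2)"
    for i j a b
  proof -
    have "(\<Sum>k\<in>UNIV. D k i j * M a b k) =
        (\<Sum>p\<in>UNIV. \<Sum>q\<in>UNIV. \<Sum>r\<in>UNIV. \<Sum>s\<in>UNIV. D a p q * D b r s * M p r i * M q s j)"
      using comult_mult[where i=a and j=b and a=i and b=j] by (simp add: mult.commute)
    also have "\<dots> = (\<Sum>p\<in>UNIV. \<Sum>r\<in>UNIV. \<Sum>q\<in>UNIV. \<Sum>s\<in>UNIV. D a p q * D b r s * M p r i * M q s j)"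
      by (rule sum.cong[OF refl], rule sum.swap)
    finally show ?thesis by (simp add: mult_ac)
  qed
  show "(\<Sum>k\<in>UNIV. E k * M a b k) = E a * E b" for a b by (rule counit_mult)
  show "(\<Sum>k\<in>UNIV. U k * D k i j) = U i * U j" for i j by (rule comult_unit)
  show "(\<Sum>k\<in>UNIV. U k * E k) = 1" using counit_unit by (simp add: mult.commute)
  show "(\<Sum>a\<in>UNIV. \<Sum>b\<in>UNIV. \<Sum>p\<in>UNIV. M a b x * A p a * D k p b) = U x * E k" for x k
  proof -
    have "(\<Sum>a\<in>UNIV. \<Sum>b\<in>UNIV. \<Sum>p\<in>UNIV. M a b x * A p a * D k p b) =
        (\<Sum>p\<in>UNIV. \<Sum>b\<in>UNIV. \<Sum>a\<in>UNIV. M a b x * A p a * D k p b)"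
      by (subst sum_cycle3_out, rule sum.cong[OF refl], rule sum.swap)
    then show ?thesis using antipode_left[where x=k and k=x] by (simp add: mult_ac)
  qed
  show "(\<Sum>a\<in>UNIV. \<Sum>b\<in>UNIV. \<Sum>p\<in>UNIV. M a b x * A p b * D k a p) = U x * E k" for x k
  proof -
    have "(\<Sum>a\<in>UNIV. \<Sum>b\<in>UNIV. \<Sum>p\<in>UNIV. M a b x * A p b * D k a p) =
        (\<Sum>a\<in>UNIV. \<Sum>p\<in>UNIV. \<Sum>b\<in>UNIV. M a b x * A p b * D k a p)"
      by (rule sum.cong[OF refl], rule sum.swap)
    then show ?thesis using antipode_right[where x=k and k=x] by (simp add: mult_ac)
  qed
qed

lemma antipode_comult:
  "(\<Sum>p\<in>UNIV. A k p * D p i j) = (\<Sum>p\<in>UNIV. \<Sum>r\<in>UNIV. D k p r * A r i * A p j)"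
  using hopf_constants.antipode_mult[OF hopf_constants_dual, of i j k] by (simp add: mult_ac)

lemma counit_antipode: "(\<Sum>j\<in>UNIV. A i j * E j) = E i"
proof -
  have "(\<Sum>j\<in>UNIV. A i j * E j) = sweedler i (\<lambda>a b. E a * (\<Sum>p\<in>UNIV. A b p * E p))"
    by (simp add: sweedler_counit_left)
  also have "\<dots> = sweedler i (\<lambda>a b. \<Sum>p\<in>UNIV. A b p * (\<Sum>k\<in>UNIV. E k * M a p k))"
    by (simp add: counit_mult mult_ac sum_distrib_left)
  also have "\<dots> = sweedler i (\<lambda>a b. \<Sum>k\<in>UNIV. E k * (\<Sum>p\<in>UNIV. A b p * M a p k))"
    by (rule arg_cong[where f="sweedler i"], intro ext, simp add: sum_distrib_left mult_ac, rule sum.swap)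
  also have "\<dots> = E i * (\<Sum>k\<in>UNIV. E k * U k)"
    by (simp only: sweedler_sum sweedler_cmult_left flip: sum_distrib_left)
      (simp add: sweedler_antipode_right_sum sum_distrib_left mult_ac)
  finally show ?thesis by (simp add: counit_unit)
qed

lemma antipode_unit: "(\<Sum>i\<in>UNIV. U i * A i j) = U j"
  using hopf_constants.counit_antipode[OF hopf_constants_dual, of j] by (simp add: mult.commute)

lemma antipode_sweedler:
  "(\<Sum>p\<in>UNIV. A u p * sweedler p F) = sweedler u (\<lambda>s t. \<Sum>p1\<in>UNIV. \<Sum>p2\<in>UNIV. A t p1 * A s p2 * F p1 p2)"
proof -
  have "(\<Sum>p\<in>UNIV. A u p * sweedler p F) = (\<Sum>a\<in>UNIV. \<Sum>b\<in>UNIV. (\<Sum>p\<in>UNIV. A u p * D p a b) * F a b)"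
    by (simp add: sweedler_def sum_distrib_left sum_distrib_right mult_ac, subst sum_cycle3_in, rule refl)
  also have "\<dots> = (\<Sum>a\<in>UNIV. \<Sum>b\<in>UNIV. \<Sum>p\<in>UNIV. \<Sum>r\<in>UNIV. D u p r * (A r a * A p b * F a b))"
    by (simp add: antipode_comult sum_distrib_right sum_distrib_left mult_ac)
  also have "\<dots> = sweedler u (\<lambda>s t. \<Sum>p1\<in>UNIV. \<Sum>p2\<in>UNIV. A t p1 * A s p2 * F p1 p2)"
    by (subst sum_swap_2_2, simp add: sweedler_def sum_distrib_left)
  finally show ?thesis .
qed

end

section \<open>Bijectivity of the antipode\<close>

context hopf_constants
begin

lemma sweedler_antipode_cancel:
  "sweedler p (\<lambda>a s. \<Sum>p2\<in>UNIV. A s p2 * (\<Sum>r\<in>UNIV. M p2 j r * (\<Sum>k\<in>UNIV. M a r k * G k))) = E p * G j"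
proof -
  have "(\<Sum>p2\<in>UNIV. A s p2 * (\<Sum>r\<in>UNIV. M p2 j r * (\<Sum>k\<in>UNIV. M a r k * G k))) =
      (\<Sum>k\<in>UNIV. G k * (\<Sum>w\<in>UNIV. (\<Sum>p2\<in>UNIV. A s p2 * M a p2 w) * M w j k))" for a s
  proof -
    have inner: "(\<Sum>r\<in>UNIV. M p2 j r * (\<Sum>k\<in>UNIV. M a r k * G k)) =
        (\<Sum>k\<in>UNIV. G k * (\<Sum>w\<in>UNIV. M a p2 w * M w j k))" for p2
      by (simp only: assoc, simp add: sum_distrib_left mult_ac, rule sum.swap)
    show ?thesis
      unfolding inner by (simp only: sum_distrib_left sum_distrib_right, subst sum_cycle3_in, simp add: mult_ac)
  qed
  then have "sweedler p (\<lambda>a s. \<Sum>p2\<in>UNIV. A s p2 * (\<Sum>r\<in>UNIV. M p2 j r * (\<Sum>k\<in>UNIV. M a r k * G k))) =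
      (\<Sum>k\<in>UNIV. G k * (\<Sum>w\<in>UNIV. (E p * U w) * M w j k))"
    by (simp add: sweedler_sum sweedler_cmult_left sweedler_cmult_right sweedler_antipode_right_sum)
  also have "\<dots> = E p * G j"
  proof -
    have "(\<Sum>w\<in>UNIV. (E p * U w) * M w j k) = E p * (if j = k then 1 else 0)" for k
      by (simp add: mult.assoc flip: sum_distrib_left add: unit_left)
    then show ?thesis by (simp add: mult.commute)
  qed
  finally show ?thesis .
qed

end

locale hopf_integral = hopf_constants M U D E A
  for M :: "'n::finite \<Rightarrow> 'n \<Rightarrow> 'n \<Rightarrow> 'k::field" and U D E A +
  fixes mu :: "'n \<Rightarrow> 'k"
  assumes integral: "\<And>x c. (\<Sum>i\<in>UNIV. mu i * D x i c) = mu x * U c"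
begin

lemma sweedler_integral: "sweedler x (\<lambda>a b. mu a * G b) = mu x * (\<Sum>c\<in>UNIV. U c * G c)"
proof -
  have "sweedler x (\<lambda>a b. mu a * G b) = (\<Sum>b\<in>UNIV. (\<Sum>a\<in>UNIV. mu a * D x a b) * G b)"
    unfolding sweedler_def by (subst sum.swap, simp add: sum_distrib_right sum_distrib_left mult_ac)
  then show ?thesis by (simp add: integral sum_distrib_left mult_ac)
qed

lemma sweedler_integral_mult_left: "sweedler m (\<lambda>q r. mu q * (\<Sum>k\<in>UNIV. M a r k * G k)) = mu m * G a"
proof -
  have "(\<Sum>c\<in>UNIV. U c * (\<Sum>k\<in>UNIV. M a c k * G k)) = (\<Sum>k\<in>UNIV. (\<Sum>c\<in>UNIV. U c * M a c k) * G k)"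
    by (simp add: sum_distrib_left sum_distrib_right mult_ac, rule sum.swap)
  then show ?thesis by (simp add: sweedler_integral unit_right)
qed

lemma sweedler_integral_mult_right: "sweedler m (\<lambda>a b. mu a * (\<Sum>r\<in>UNIV. M b r c * x r)) = mu m * x c"
proof -
  have "(\<Sum>b\<in>UNIV. U b * (\<Sum>r\<in>UNIV. M b r c * x r)) = (\<Sum>r\<in>UNIV. (\<Sum>b\<in>UNIV. U b * M b r c) * x r)"
    by (simp add: sum_distrib_left sum_distrib_right mult_ac, rule sum.swap)
  then show ?thesis by (simp add: sweedler_integral unit_left)
qed

text \<open>pairing t w = \<mu>(S(b_t) b_w).\<close>

definition pairing :: "'n \<Rightarrow> 'n \<Rightarrow> 'k" where
  "pairing t w = (\<Sum>p\<in>UNIV. \<Sum>m\<in>UNIV. A t p * M p w m * mu m)"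

lemma sweedler_pairing_transfer:
  "sweedler j (\<lambda>a b. pairing i a * G b) = sweedler i (\<lambda>a b. G a * pairing b j)"
proof -
  define F where "F a = (\<lambda>p1 p2. sweedler j (\<lambda>j1 j2. \<Sum>q\<in>UNIV. \<Sum>r\<in>UNIV.
    M p1 j1 q * M p2 j2 r * (mu q * (\<Sum>k\<in>UNIV. M a r k * G k))))" for a
  have expand: "G a * pairing u j = (\<Sum>p\<in>UNIV. A u p * sweedler p (F a))" for a u
  proof -
    have "G a * pairing u j = (\<Sum>m\<in>UNIV. (\<Sum>p\<in>UNIV. A u p * M p j m) * (mu m * G a))"
      by (simp add: pairing_def sum_distrib_left sum_distrib_right mult_ac, rule sum.swap)
    also have "\<dots> = (\<Sum>p\<in>UNIV. A u p * (\<Sum>m\<in>UNIV. M p j m *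
        sweedler m (\<lambda>q r. mu q * (\<Sum>k\<in>UNIV. M a r k * G k))))"
      unfolding sweedler_integral_mult_left
      by (simp add: sum_distrib_left sum_distrib_right, subst sum.swap, simp add: mult_ac)
    finally show ?thesis by (simp add: F_def sweedler_mult)
  qed
  have cancel: "sweedler p (\<lambda>a s. \<Sum>p1\<in>UNIV. \<Sum>p2\<in>UNIV. A t p1 * A s p2 * F a p1 p2) =
      E p * sweedler j (\<lambda>j1 j2. (\<Sum>p1\<in>UNIV. A t p1 * (\<Sum>q\<in>UNIV. M p1 j1 q * mu q)) * G j2)" for p t
  proof -
    have "(\<Sum>p1\<in>UNIV. \<Sum>p2\<in>UNIV. A t p1 * A s p2 * F a p1 p2) = sweedler j (\<lambda>j1 j2.
        (\<Sum>p1\<in>UNIV. A t p1 * (\<Sum>q\<in>UNIV. M p1 j1 q * mu q)) *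
        (\<Sum>p2\<in>UNIV. A s p2 * (\<Sum>r\<in>UNIV. M p2 j2 r * (\<Sum>k\<in>UNIV. M a r k * G k))))" for a s
      by (simp add: F_def sweedler_cmult_left[symmetric] sweedler_sum[symmetric])
        (simp add: sum_product mult_ac)
    then show ?thesis
      by (simp only: sweedler_commute[of p] sweedler_cmult_left sweedler_antipode_cancel)
        (simp add: sweedler_cmult_left[symmetric] mult_ac)
  qed
  have "sweedler i (\<lambda>a b. G a * pairing b j) =
      sweedler i (\<lambda>a u. sweedler u (\<lambda>s t. \<Sum>p1\<in>UNIV. \<Sum>p2\<in>UNIV. A t p1 * A s p2 * F a p1 p2))"
    by (simp only: expand antipode_sweedler)
  also have "\<dots> = sweedler i (\<lambda>p t. E p *
      sweedler j (\<lambda>j1 j2. (\<Sum>p1\<in>UNIV. A t p1 * (\<Sum>q\<in>UNIV. M p1 j1 q * mu q)) * G j2))"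
    by (simp only: sweedler_coassoc[symmetric] cancel)
  also have "\<dots> = sweedler j (\<lambda>a b. pairing i a * G b)"
    by (simp add: sweedler_counit_left pairing_def sum_distrib_left sum_distrib_right mult_ac)
  finally show ?thesis ..
qed

text \<open>antipode2_mult l v j is the j-th coordinate of S(S(b_v)) b_l.\<close>

definition antipode2_mult :: "'n \<Rightarrow> 'n \<Rightarrow> 'n \<Rightarrow> 'k" where
  "antipode2_mult l v j = (\<Sum>p\<in>UNIV. \<Sum>q\<in>UNIV. A v p * A p q * M q l j)"

lemma pairing_antipode2_mult:
  "(\<Sum>j\<in>UNIV. antipode2_mult l h j * pairing b j) =
   (\<Sum>s\<in>UNIV. (\<Sum>p\<in>UNIV. A h p * M p b s) * (\<Sum>k\<in>UNIV. A s k * (\<Sum>m\<in>UNIV. M k l m * mu m)))"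
proof -
  have "(\<Sum>j\<in>UNIV. antipode2_mult l h j * pairing b j) = (\<Sum>p\<in>UNIV. \<Sum>p'\<in>UNIV. \<Sum>q\<in>UNIV. \<Sum>m\<in>UNIV.
      \<Sum>j\<in>UNIV. A h p * A p q * A b p' * mu m * (M q l j * M p' j m))"
    by (simp add: antipode2_mult_def pairing_def sum_distrib_left sum_distrib_right mult_ac,
        rule sum_cycle5_out[symmetric])
  also have "\<dots> = (\<Sum>p\<in>UNIV. \<Sum>p'\<in>UNIV. \<Sum>q\<in>UNIV. \<Sum>m\<in>UNIV.
      A h p * A p q * A b p' * mu m * (\<Sum>k\<in>UNIV. M p' q k * M k l m))"
    by (simp add: sum_distrib_left assoc)
  also have "\<dots> = (\<Sum>p\<in>UNIV. \<Sum>p'\<in>UNIV. \<Sum>q\<in>UNIV. \<Sum>m\<in>UNIV. \<Sum>k\<in>UNIV.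
      (A h p * mu m * M k l m) * (A b p' * A p q * M p' q k))"
    by (simp add: sum_distrib_left mult_ac)
  also have "\<dots> = (\<Sum>p\<in>UNIV. \<Sum>m\<in>UNIV. \<Sum>k\<in>UNIV.
      (A h p * mu m * M k l m) * (\<Sum>p'\<in>UNIV. \<Sum>q\<in>UNIV. A b p' * A p q * M p' q k))"
    by (rule sum.cong[OF refl], subst sum_swap_2_2, simp add: sum_distrib_left)
  also have "\<dots> = (\<Sum>p\<in>UNIV. \<Sum>m\<in>UNIV. \<Sum>k\<in>UNIV. (A h p * mu m * M k l m) * (\<Sum>s\<in>UNIV. M p b s * A s k))"
    by (simp only: antipode_mult)
  also have "\<dots> = (\<Sum>p\<in>UNIV. \<Sum>m\<in>UNIV. \<Sum>k\<in>UNIV. \<Sum>s\<in>UNIV.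
      (A h p * M p b s) * (A s k * (M k l m * mu m)))"
    by (simp add: sum_distrib_left mult_ac)
  also have "\<dots> = (\<Sum>p\<in>UNIV. \<Sum>s\<in>UNIV. \<Sum>k\<in>UNIV. \<Sum>m\<in>UNIV. (A h p * M p b s) * (A s k * (M k l m * mu m)))"
    by (rule sum.cong[OF refl], rule sum_cycle3_in[THEN trans], rule sum.swap)
  also have "\<dots> = (\<Sum>s\<in>UNIV. \<Sum>p\<in>UNIV. \<Sum>k\<in>UNIV. \<Sum>m\<in>UNIV. (A h p * M p b s) * (A s k * (M k l m * mu m)))"
    by (rule sum.swap)
  also have "\<dots> = (\<Sum>s\<in>UNIV. (\<Sum>p\<in>UNIV. A h p * M p b s) * (\<Sum>k\<in>UNIV. A s k * (\<Sum>m\<in>UNIV. M k l m * mu m)))"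
    by (rule sum.cong[OF refl], simp add: sum_distrib_left sum_distrib_right, rule sum_cycle3_in)
  finally show ?thesis .
qed

lemma sweedler_pairing_antipode2_mult:
  "sweedler r (\<lambda>h b. \<Sum>j\<in>UNIV. antipode2_mult l h j * pairing b j) = E r * mu l"
proof -
  have "sweedler r (\<lambda>h b. \<Sum>j\<in>UNIV. antipode2_mult l h j * pairing b j) =
      (\<Sum>s\<in>UNIV. (E r * U s) * (\<Sum>k\<in>UNIV. A s k * (\<Sum>m\<in>UNIV. M k l m * mu m)))"
    by (simp only: pairing_antipode2_mult sweedler_sum sweedler_cmult_right sum_distrib_right
        flip: sum_distrib_right sweedler_antipode_left_sum)
  also have "\<dots> = E r * (\<Sum>m\<in>UNIV. (\<Sum>k\<in>UNIV. (\<Sum>s\<in>UNIV. U s * A s k) * M k l m) * mu m)"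
    by (simp add: sum_distrib_left sum_distrib_right mult_ac,
        subst sum_cycle3_out, subst sum.swap, rule refl)
  also have "\<dots> = E r * mu l"
    by (simp add: antipode_unit unit_left)
  finally show ?thesis .
qed

text \<open>pre_inverse l w c is the c-th coordinate of \<mu>(b_l) S^-1(b_w), written as a sum
  over the dual basis.\<close>

definition pre_inverse :: "'n \<Rightarrow> 'n \<Rightarrow> 'n \<Rightarrow> 'k" where
  "pre_inverse l w c = (\<Sum>j\<in>UNIV. sweedler j (\<lambda>j1 r. (\<Sum>m\<in>UNIV. M w j1 m * mu m) *
      sweedler r (\<lambda>j2 j3. antipode2_mult l j3 j * (if j2 = c then 1 else 0))))"

lemma antipode_pre_inverse:
  "(\<Sum>w\<in>UNIV. A i w * pre_inverse l w c) = mu l * (if i = c then 1 else 0)"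
proof -
  define \<delta> where "\<delta> j2 j3 j = antipode2_mult l j3 j * (if j2 = c then 1 else 0)" for j2 j3 j
  have "(\<Sum>w\<in>UNIV. A i w * pre_inverse l w c) =
      (\<Sum>j\<in>UNIV. sweedler j (\<lambda>j1 r. pairing i j1 * sweedler r (\<lambda>j2 j3. \<delta> j2 j3 j)))"
  proof -
    have "(\<Sum>w\<in>UNIV. A i w * pre_inverse l w c) = (\<Sum>j\<in>UNIV. sweedler j (\<lambda>j1 r.
        (\<Sum>w\<in>UNIV. A i w * (\<Sum>m\<in>UNIV. M w j1 m * mu m)) * sweedler r (\<lambda>j2 j3. \<delta> j2 j3 j)))"
      unfolding pre_inverse_def \<delta>_def
      by (simp only: sum_distrib_left sum_distrib_right sweedler_sum sweedler_cmult_left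
          sweedler_cmult_right mult.assoc, rule sum.swap)
    then show ?thesis by (simp add: pairing_def sum_distrib_left mult_ac)
  qed
  also have "\<dots> = (\<Sum>j\<in>UNIV. sweedler i (\<lambda>a b. sweedler a (\<lambda>j2 j3. \<delta> j2 j3 j) * pairing b j))"
    by (simp only: sweedler_pairing_transfer)
  also have "\<dots> = sweedler i (\<lambda>a b. sweedler a (\<lambda>j2 j3. \<Sum>j\<in>UNIV. pairing b j * \<delta> j2 j3 j))"
    by (simp only: sweedler_sum[symmetric] sweedler_cmult_left[symmetric] mult.commute[of _ "pairing _ _"])
  also have "\<dots> = sweedler i (\<lambda>j2 r. sweedler r (\<lambda>j3 b. \<Sum>j\<in>UNIV. pairing b j * \<delta> j2 j3 j))"
    by (rule sweedler_coassoc)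
  also have "\<dots> = sweedler i (\<lambda>j2 r. (if j2 = c then 1 else 0) * (E r * mu l))"
  proof -
    have "sweedler r (\<lambda>j3 b. \<Sum>j\<in>UNIV. pairing b j * \<delta> j2 j3 j) =
        (if j2 = c then 1 else 0) * sweedler r (\<lambda>h b. \<Sum>j\<in>UNIV. antipode2_mult l h j * pairing b j)"
      for j2 r
      by (cases "j2 = c") (simp_all add: \<delta>_def mult.commute sweedler_def)
    then show ?thesis by (simp only: sweedler_pairing_antipode2_mult)
  qed
  also have "\<dots> = mu l * (if i = c then 1 else 0)"
    by (simp only: mult.left_commute[of _ "E _"] sweedler_counit_right) simp
  finally show ?thesis .
qed

lemma antipode_left_inverse_exists:
  assumes "mu \<noteq> (\<lambda>_. 0)"
  shows "\<exists>L. \<forall>i c. (\<Sum>w\<in>UNIV. A i w * L w c) = (if i = c then 1 else 0)"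
proof -
  obtain l where l: "mu l \<noteq> 0" using assms by auto
  have "(\<Sum>w\<in>UNIV. A i w * (pre_inverse l w c / mu l)) = (if i = c then 1 else 0)" for i c
    using l by (simp add: sum_divide_distrib[symmetric] antipode_pre_inverse)
  then show ?thesis by (intro exI[of _ "\<lambda>w c. pre_inverse l w c / mu l"] allI)
qed

end

locale hopf_integral_cointegral = hopf_integral M U D E A mu
  for M :: "'n::finite \<Rightarrow> 'n \<Rightarrow> 'n \<Rightarrow> 'k::field" and U D E A mu +
  fixes e :: "'n \<Rightarrow> 'k"
  assumes cointegral: "\<And>j k. (\<Sum>i\<in>UNIV. e i * M i j k) = E j * e k"
    and normalized: "(\<Sum>i\<in>UNIV. mu i * e i) = 1"
begin

lemma integral_nonzero: "mu \<noteq> (\<lambda>_. 0)"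
  using normalized by auto

lemma cointegral_nonzero: "e \<noteq> (\<lambda>_. 0)"
  using normalized by auto

lemma hopf_integral_dual: "hopf_integral (\<lambda>i j k. D k i j) E (\<lambda>k i j. M i j k) U (\<lambda>i j. A j i) e"
proof -
  interpret dual: hopf_constants "\<lambda>i j k. D k i j" E "\<lambda>k i j. M i j k" U "\<lambda>i j. A j i"
    by (rule hopf_constants_dual)
  show ?thesis
    by unfold_locales (simp add: cointegral mult.commute)
qed

text \<open>A right inverse of S comes from the integral e of the dual Hopf algebra.\<close>

lemma antipode_inverse_exists:
  "\<exists>L. (\<forall>i c. (\<Sum>w\<in>UNIV. A i w * L w c) = (if i = c then 1 else 0)) \<and>
       (\<forall>i c. (\<Sum>w\<in>UNIV. L i w * A w c) = (if i = c then 1 else 0))"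
proof -
  obtain L where L: "\<And>i c. (\<Sum>w\<in>UNIV. A i w * L w c) = (if i = c then 1 else 0)"
    using antipode_left_inverse_exists[OF integral_nonzero] by blast
  obtain L' where L': "\<And>i c. (\<Sum>w\<in>UNIV. A w i * L' w c) = (if i = c then 1 else 0)"
    using hopf_integral.antipode_left_inverse_exists[OF hopf_integral_dual cointegral_nonzero] by blast
  have "L c j = L' j c" for c j
  proof -
    have "L c j = (\<Sum>i\<in>UNIV. (\<Sum>w\<in>UNIV. A w i * L' w c) * L i j)"
      by (simp add: L' eq_commute[of _ c])
    also have "\<dots> = (\<Sum>w\<in>UNIV. L' w c * (\<Sum>i\<in>UNIV. A w i * L i j))"
      by (simp add: sum_distrib_left sum_distrib_right mult_ac, rule sum.swap)
    finally show ?thesis by (simp add: L)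
  qed
  then have "(\<Sum>w\<in>UNIV. L i w * A w c) = (if i = c then 1 else 0)" for i c
    using L'[of c i] by (simp add: mult.commute eq_commute)
  with L show ?thesis by blast
qed

end

section \<open>The antipode in terms of the integral and the cointegral\<close>

lemma (in hopf_constants) sweedler_mult_antipode_right:
  "sweedler j (\<lambda>d q. \<Sum>v\<in>UNIV. M b d v * (\<Sum>r\<in>UNIV. M v r c * A q r)) = E j * (if b = c then 1 else 0)"
proof -
  have "(\<Sum>v\<in>UNIV. M b d v * (\<Sum>r\<in>UNIV. M v r c * A q r)) =
      (\<Sum>k\<in>UNIV. M b k c * (\<Sum>r\<in>UNIV. A q r * M d r k))" for d q
  proof -
    have "(\<Sum>v\<in>UNIV. M b d v * (\<Sum>r\<in>UNIV. M v r c * A q r)) =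
        (\<Sum>r\<in>UNIV. A q r * (\<Sum>v\<in>UNIV. M b d v * M v r c))"
      by (simp add: sum_distrib_left mult_ac, rule sum.swap)
    also have "\<dots> = (\<Sum>r\<in>UNIV. A q r * (\<Sum>k\<in>UNIV. M d r k * M b k c))"
      by (simp only: assoc)
    also have "\<dots> = (\<Sum>k\<in>UNIV. M b k c * (\<Sum>r\<in>UNIV. A q r * M d r k))"
      by (simp only: sum_distrib_left, subst sum.swap, simp add: mult_ac)
    finally show ?thesis .
  qed
  then have "sweedler j (\<lambda>d q. \<Sum>v\<in>UNIV. M b d v * (\<Sum>r\<in>UNIV. M v r c * A q r)) =
      (\<Sum>k\<in>UNIV. M b k c * (E j * U k))"
    by (simp add: sweedler_sum sweedler_cmult_left sweedler_antipode_right_sum)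
  then show ?thesis
    by (simp add: sum_distrib_left[symmetric] mult.left_commute[of _ "E j"] mult.commute[of "M _ _ _"] unit_right)
qed

context hopf_integral_cointegral
begin

lemma counit_eq_integral_cointegral: "E p = (\<Sum>m\<in>UNIV. (\<Sum>i\<in>UNIV. e i * M i p m) * mu m)"
proof -
  have "(\<Sum>m\<in>UNIV. e m * mu m) = 1"
    using normalized by (simp add: mult.commute)
  then show ?thesis
    by (simp only: cointegral mult.assoc sum_distrib_left[symmetric] mult_1_right)
qed

text \<open>S(y) = \<mu>(e_(1) y) e_(2).\<close>

lemma antipode_cointegral_formula:
  "A y c = (\<Sum>i\<in>UNIV. e i * (\<Sum>a\<in>UNIV. D i a c * (\<Sum>m\<in>UNIV. M a y m * mu m)))"
proof -
  define F where "F q al be = (\<lambda>ga de.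
    \<Sum>u\<in>UNIV. \<Sum>v\<in>UNIV. M al ga u * M be de v * (mu u * (\<Sum>r\<in>UNIV. M v r c * A q r)))" for q al be
  have "A y c = sweedler y (\<lambda>p q. E p * A q c)"
    by (simp add: sweedler_counit_left)
  also have "\<dots> = sweedler y (\<lambda>p q. \<Sum>m\<in>UNIV. (\<Sum>i\<in>UNIV. e i * M i p m) * (mu m * A q c))"
    by (simp only: counit_eq_integral_cointegral sum_distrib_right mult.assoc)
  also have "\<dots> = sweedler y (\<lambda>p q. \<Sum>i\<in>UNIV. e i * sweedler i (\<lambda>al be. sweedler p (F q al be)))"
  proof -
    have "(\<Sum>m\<in>UNIV. (\<Sum>i\<in>UNIV. e i * M i p m) * X m) = (\<Sum>i\<in>UNIV. e i * (\<Sum>m\<in>UNIV. M i p m * X m))"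
      for p and X :: "'n \<Rightarrow> 'k"
      by (simp add: sum_distrib_left sum_distrib_right mult_ac, rule sum.swap)
    then show ?thesis by (simp only: sweedler_integral_mult_right[where x="A q" for q, symmetric] sweedler_mult F_def)
  qed
  also have "\<dots> = (\<Sum>i\<in>UNIV. e i * sweedler i (\<lambda>al be. sweedler y (\<lambda>ga j'. sweedler j' (\<lambda>de q. F q al be ga de))))"
    by (simp only: sweedler_sum_sweedler sweedler_coassoc)
  also have "\<dots> = (\<Sum>i\<in>UNIV. e i * sweedler i (\<lambda>al be.
      sweedler y (\<lambda>ga j'. E j' * ((\<Sum>u\<in>UNIV. M al ga u * mu u) * (if be = c then 1 else 0)))))"
  proof -
    have "sweedler j' (\<lambda>de q. F q al be ga de) =
        E j' * ((\<Sum>u\<in>UNIV. M al ga u * mu u) * (if be = c then 1 else 0))" for al be ga j'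
    proof -
      have "sweedler j' (\<lambda>de q. F q al be ga de) = (\<Sum>u\<in>UNIV. M al ga u * mu u) *
          sweedler j' (\<lambda>de q. \<Sum>v\<in>UNIV. M be de v * (\<Sum>r\<in>UNIV. M v r c * A q r))"
        by (simp add: F_def sweedler_cmult_left[symmetric] sum_product mult_ac)
      then show ?thesis by (simp only: sweedler_mult_antipode_right mult.left_commute)
    qed
    then show ?thesis by (simp only:)
  qed
  also have "\<dots> = (\<Sum>i\<in>UNIV. e i * (\<Sum>a\<in>UNIV. D i a c * (\<Sum>m\<in>UNIV. M a y m * mu m)))"
    by (simp only: sweedler_counit_right) (simp add: sweedler_def mult_ac)
  finally show ?thesis .
qed

definition antipode_cointegral :: "'n \<Rightarrow> 'k" where
  "antipode_cointegral m = (\<Sum>y\<in>UNIV. e y * A y m)"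

text \<open>S(e) is a left cointegral: S reverses products and is surjective.\<close>

lemma antipode_cointegral_left:
  "(\<Sum>c\<in>UNIV. M a c m * antipode_cointegral c) = E a * antipode_cointegral m"
proof -
  obtain L where L: "\<And>i c. (\<Sum>w\<in>UNIV. L i w * A w c) = (if i = c then 1 else 0)"
    using antipode_inverse_exists by blast
  have inv_counit: "(\<Sum>w\<in>UNIV. L a w * E w) = E a"
  proof -
    have "(\<Sum>w\<in>UNIV. L a w * E w) = (\<Sum>w\<in>UNIV. L a w * (\<Sum>j\<in>UNIV. A w j * E j))"
      by (simp add: counit_antipode)
    also have "\<dots> = (\<Sum>j\<in>UNIV. (\<Sum>w\<in>UNIV. L a w * A w j) * E j)"
      by (simp add: sum_distrib_left sum_distrib_right mult_ac, rule sum.swap)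
    finally show ?thesis by (simp add: L)
  qed
  have "(\<Sum>c\<in>UNIV. M a c m * antipode_cointegral c) =
      (\<Sum>w\<in>UNIV. L a w * (\<Sum>y\<in>UNIV. e y * (\<Sum>j\<in>UNIV. \<Sum>c\<in>UNIV. A w j * A y c * M j c m)))"
  proof -
    have "(\<Sum>c\<in>UNIV. M a c m * antipode_cointegral c) =
        (\<Sum>j\<in>UNIV. (\<Sum>w\<in>UNIV. L a w * A w j) * (\<Sum>c\<in>UNIV. M j c m * (\<Sum>y\<in>UNIV. e y * A y c)))"
      by (simp add: L antipode_cointegral_def)
    moreover have "(\<Sum>j\<in>UNIV. (\<Sum>w\<in>UNIV. P w * Q w j) * (\<Sum>c\<in>UNIV. R j c * (\<Sum>y\<in>UNIV. S y * T y c))) =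
        (\<Sum>w\<in>UNIV. P w * (\<Sum>y\<in>UNIV. S y * (\<Sum>j\<in>UNIV. \<Sum>c\<in>UNIV. Q w j * T y c * R j c)))"
      for P S :: "'n \<Rightarrow> 'k" and Q R T :: "'n \<Rightarrow> 'n \<Rightarrow> 'k"
      by (simp add: sum_distrib_left sum_distrib_right mult_ac, rule sum_swap_2_2[THEN trans], rule sum.swap)
    ultimately show ?thesis by simp
  qed
  also have "\<dots> = (\<Sum>w\<in>UNIV. L a w * (\<Sum>p\<in>UNIV. (\<Sum>y\<in>UNIV. e y * M y w p) * A p m))"
  proof -
    have "(\<Sum>y\<in>UNIV. e y * (\<Sum>p\<in>UNIV. M y w p * A p m)) = (\<Sum>p\<in>UNIV. (\<Sum>y\<in>UNIV. e y * M y w p) * A p m)" for w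
      by (simp add: sum_distrib_left sum_distrib_right mult_ac, rule sum.swap)
    then show ?thesis by (simp only: antipode_mult[symmetric])
  qed
  also have "\<dots> = (\<Sum>w\<in>UNIV. L a w * E w) * antipode_cointegral m"
    by (simp add: cointegral antipode_cointegral_def sum_distrib_left sum_distrib_right mult_ac, rule sum.swap)
  finally show ?thesis by (simp only: inv_counit)
qed

lemma antipode_antipode_cointegral:
  "(\<Sum>c\<in>UNIV. antipode_cointegral c * A c d) = e d * (\<Sum>m\<in>UNIV. antipode_cointegral m * mu m)"
proof -
  define K where "K = (\<Sum>m\<in>UNIV. antipode_cointegral m * mu m)"
  have "(\<Sum>c\<in>UNIV. antipode_cointegral c * A c d) = (\<Sum>i\<in>UNIV. e i * (\<Sum>a\<in>UNIV. D i a d *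
      (\<Sum>m\<in>UNIV. (\<Sum>c\<in>UNIV. M a c m * antipode_cointegral c) * mu m)))"
    by (simp add: antipode_cointegral_formula[of _ d] sum_distrib_left sum_distrib_right mult_ac,
        subst sum_cycle4_in, rule refl)
  also have "\<dots> = (\<Sum>i\<in>UNIV. e i * (\<Sum>a\<in>UNIV. E a * D i a d)) * K"
    by (simp add: antipode_cointegral_left K_def sum_distrib_left sum_distrib_right mult_ac)
  also have "\<dots> = e d * K"
    by (simp add: counit_left)
  finally show ?thesis unfolding K_def .
qed

lemma integral_antipode_cointegral:
  "(\<Sum>m\<in>UNIV. antipode_cointegral m * mu m) =
   (\<Sum>m'\<in>UNIV. mu m' * (\<Sum>a\<in>UNIV. \<Sum>y\<in>UNIV. (\<Sum>k\<in>UNIV. (\<Sum>i\<in>UNIV. e i * D i a k) * mu k) * e y * M a y m'))"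
  by (simp add: antipode_cointegral_def antipode_cointegral_formula sum_distrib_left sum_distrib_right mult_ac,
      rule sum_cycle5_out[THEN trans], rule sum.cong[OF refl], rule sum_cycle4_in[symmetric, THEN trans],
      rule sum.cong[OF refl], subst sum.swap, simp add: mult_ac)

end

section \<open>From the vector-level definitions to structure constants\<close>

definition basis_vec :: "'n \<Rightarrow> 'n \<Rightarrow> 'k::comm_ring_1" where
  "basis_vec i = (\<lambda>j. if j = i then 1 else 0)"

lemma mul_basis_vec: "mul M (basis_vec i) (basis_vec j) = M i j"
  by (simp add: mul_def basis_vec_def)

lemma cop_basis_vec: "cop D (basis_vec x) = (\<lambda>(a, b). D x a b)"
  by (auto simp: cop_def basis_vec_def)

lemma hopf_constants_of_hopf_algebra:
  assumes "hopf_algebra M U D E A"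
  shows "hopf_constants M U D E A"
proof -
  from assms obtain
        mul_assoc: "\<And>x y z. mul M (mul M x y) z = mul M x (mul M y z)"
    and mul_unit_left: "\<And>x. mul M U x = x" and mul_unit_right: "\<And>x. mul M x U = x"
    and cop_coassoc: "\<And>x. cop_left D (cop D x) = cop_right D (cop D x)"
    and cop_counit_left: "\<And>x. cou_left E (cop D x) = x"
    and cop_counit_right: "\<And>x. cou_right E (cop D x) = x"
    and cop_mul: "\<And>x y. cop D (mul M x y) = tmul M (cop D x) (cop D y)"
    and cop_unit: "cop D U = tunit U"
    and cou_mul: "\<And>x y. cou E (mul M x y) = cou E x * cou E y" and cou_unit: "cou E U = 1"
    and ant_left: "\<And>x. ant_left M A (cop D x) = smul (cou E x) U"
    and ant_right: "\<And>x. ant_right M A (cop D x) = smul (cou E x) U"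
    unfolding hopf_algebra_def by blast
  show ?thesis
  proof
    show "(\<Sum>k\<in>UNIV. M i j k * M k l m) = (\<Sum>k\<in>UNIV. M j l k * M i k m)" for i j l m
      using fun_cong[OF mul_assoc[of "basis_vec i" "basis_vec j" "basis_vec l"], of m]
      by (simp add: mul_basis_vec) (simp add: mul_def basis_vec_def mult.commute)
    show "(\<Sum>i\<in>UNIV. U i * M i j k) = (if j = k then 1 else 0)" for j k
      using fun_cong[OF mul_unit_left[of "basis_vec j"], of k]
      by (simp add: mul_def basis_vec_def eq_commute)
    show "(\<Sum>j\<in>UNIV. U j * M i j k) = (if i = k then 1 else 0)" for i k
      using fun_cong[OF mul_unit_right[of "basis_vec i"], of k]
      by (simp add: mul_def basis_vec_def eq_commute mult.commute)
    show "(\<Sum>i\<in>UNIV. D x i c * D i a b) = (\<Sum>j\<in>UNIV. D x a j * D j b c)" for x a b c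
      using fun_cong[OF cop_coassoc[of "basis_vec x"], of "(a, b, c)"]
      by (simp add: cop_left_def cop_right_def cop_basis_vec)
    show "(\<Sum>i\<in>UNIV. E i * D x i c) = (if x = c then 1 else 0)" for x c
      using fun_cong[OF cop_counit_left[of "basis_vec x"], of c]
      by (simp add: cou_left_def cop_basis_vec) (simp add: basis_vec_def eq_commute)
    show "(\<Sum>j\<in>UNIV. E j * D x a j) = (if x = a then 1 else 0)" for x a
      using fun_cong[OF cop_counit_right[of "basis_vec x"], of a]
      by (simp add: cou_right_def cop_basis_vec) (simp add: basis_vec_def eq_commute)
    show "(\<Sum>k\<in>UNIV. M i j k * D k a b) =
       (\<Sum>i1\<in>UNIV. \<Sum>j1\<in>UNIV. \<Sum>i2\<in>UNIV. \<Sum>j2\<in>UNIV. D i i1 j1 * D j i2 j2 * M i1 i2 a * M j1 j2 b)"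
      for i j a b
      using fun_cong[OF cop_mul[of "basis_vec i" "basis_vec j"], of "(a, b)"]
      by (simp add: mul_basis_vec tmul_def cop_basis_vec) (simp add: cop_def mult.commute)
    show "(\<Sum>k\<in>UNIV. U k * D k a b) = U a * U b" for a b
      using fun_cong[OF cop_unit, of "(a, b)"] by (simp add: cop_def tunit_def)
    show "(\<Sum>k\<in>UNIV. E k * M i j k) = E i * E j" for i j
      using cou_mul[of "basis_vec i" "basis_vec j"]
      by (simp add: mul_basis_vec cou_def) (simp add: basis_vec_def)
    show "(\<Sum>k\<in>UNIV. E k * U k) = 1"
      using cou_unit by (simp add: cou_def)
    show "(\<Sum>a\<in>UNIV. \<Sum>b\<in>UNIV. \<Sum>p\<in>UNIV. D x a b * A a p * M p b k) = E x * U k" for x k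
      using fun_cong[OF ant_left[of "basis_vec x"], of k]
      by (simp add: ant_left_def cop_basis_vec smul_def cou_def) (simp add: basis_vec_def)
    show "(\<Sum>a\<in>UNIV. \<Sum>b\<in>UNIV. \<Sum>p\<in>UNIV. D x a b * A b p * M a p k) = E x * U k" for x k
      using fun_cong[OF ant_right[of "basis_vec x"], of k]
      by (simp add: ant_right_def cop_basis_vec smul_def cou_def) (simp add: basis_vec_def)
  qed
qed

lemma hopf_integral_cointegral_of_hopf_algebra:
  assumes "hopf_algebra M U D E A" and "right_integral M U D mu"
    and "right_cointegral M E e" and "ev mu e = 1"
  shows "hopf_integral_cointegral M U D E A mu e"
proof -
  interpret hopf_constants M U D E A
    using assms(1) by (rule hopf_constants_of_hopf_algebra)
  show ?thesis
  proof
    show "(\<Sum>i\<in>UNIV. mu i * D x i c) = mu x * U c" for x c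
      using fun_cong[OF assms(2)[unfolded right_integral_def, rule_format, of "basis_vec x"], of c]
      by (simp add: cop_basis_vec smul_def ev_def) (simp add: basis_vec_def)
    show "(\<Sum>i\<in>UNIV. e i * M i j k) = E j * e k" for j k
      using fun_cong[OF assms(3)[unfolded right_cointegral_def, rule_format, of "basis_vec j"], of k]
      by (simp add: mul_def smul_def cou_def basis_vec_def)
    show "(\<Sum>i\<in>UNIV. mu i * e i) = 1"
      using assms(4) by (simp add: ev_def)
  qed
qed

lemma ant_smul: "ant A (smul c x) = smul c (ant A x)"
  by (simp add: ant_def smul_def sum_distrib_left mult_ac)

context hopf_integral_cointegral
begin

lemma bij_ant: "bij (ant A)"
proof -
  obtain L where L: "\<And>i c. (\<Sum>w\<in>UNIV. A i w * L w c) = (if i = c then 1 else 0)"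
    and L': "\<And>i c. (\<Sum>w\<in>UNIV. L i w * A w c) = (if i = c then 1 else 0)"
    using antipode_inverse_exists by blast
  define T where "T y = (\<lambda>j. \<Sum>i\<in>UNIV. y i * L i j)" for y :: "'n \<Rightarrow> 'k"
  have "ant A (T y) j = (\<Sum>k\<in>UNIV. y k * (\<Sum>i\<in>UNIV. L k i * A i j))" for y j
    by (simp add: ant_def T_def sum_distrib_left sum_distrib_right mult_ac, rule sum.swap)
  then have right_inverse: "ant A (T y) = y" for y
    by (simp add: L' fun_eq_iff)
  have "T (ant A y) j = (\<Sum>k\<in>UNIV. y k * (\<Sum>i\<in>UNIV. A k i * L i j))" for y j
    by (simp add: ant_def T_def sum_distrib_left sum_distrib_right mult_ac, rule sum.swap)
  then have left_inverse: "T (ant A y) = y" for y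
    by (simp add: L fun_eq_iff)
  show ?thesis
    using left_inverse right_inverse by (metis bij_betw_byWitness subset_UNIV)
qed

lemma ant_ant_cointegral: "ant A (ant A e) = smul (ev mu (ant A e)) e"
  using antipode_antipode_cointegral
  by (simp add: ant_def smul_def ev_def antipode_cointegral_def[symmetric] mult.commute)

lemma ev_integral_ant_cointegral:
  "ev mu (ant A e) = ev mu (mul M (\<lambda>j. \<Sum>k\<in>UNIV. cop D e (j, k) * mu k) e)"
  using integral_antipode_cointegral
  by (simp add: ant_def ev_def mul_def cop_def antipode_cointegral_def[symmetric] mult.commute)

end

theorem lemma5p2:
  fixes M :: "'n::finite \<Rightarrow> 'n \<Rightarrow> 'n \<Rightarrow> 'k::field"
    and U :: "'n \<Rightarrow> 'k"
    and D :: "'n \<Rightarrow> 'n \<Rightarrow> 'n \<Rightarrow> 'k"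
    and E :: "'n \<Rightarrow> 'k"
    and A :: "'n \<Rightarrow> 'n \<Rightarrow> 'k"
    and muR :: "'n \<Rightarrow> 'k"
    and eR :: "'n \<Rightarrow> 'k"
  assumes hopf: "hopf_algebra M U D E A"
    and int: "right_integral M U D muR" and int_nz: "muR \<noteq> (\<lambda>_. 0)"
    and coint: "right_cointegral M E eR" and coint_nz: "eR \<noteq> (\<lambda>_. 0)"
    and norm: "ev muR eR = 1"
  shows "let a = (\<lambda>j. \<Sum>k\<in>UNIV. cop D eR (j, k) * muR k);
             alpha = (\<lambda>x. ev muR (mul M x eR));
             q = alpha a;
             eL = the_inv (ant A) eR;
             muL = (\<lambda>x. ev muR (ant A x))
         in ant A eR = smul q eL \<and> muL eR = q"
proof -
  interpret hopf_integral_cointegral M U D E A muR eR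
    using hopf int coint norm by (rule hopf_integral_cointegral_of_hopf_algebra)
  define q where "q = ev muR (mul M (\<lambda>j. \<Sum>k\<in>UNIV. cop D eR (j, k) * muR k) eR)"
  have antipode_square: "ant A (ant A eR) = smul q eR"
    using ant_ant_cointegral ev_integral_ant_cointegral by (simp add: q_def)
  have "ant A (smul q (the_inv (ant A) eR)) = ant A (ant A eR)"
    using bij_ant by (simp add: ant_smul f_the_inv_into_f_bij_betw antipode_square)
  then have "ant A eR = smul q (the_inv (ant A) eR)"
    using bij_ant by (metis bij_is_inj injD)
  then show ?thesis
    using ev_integral_ant_cointegral by (simp add: Let_def q_def)
qed

end
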